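(* Let $IS$ be an ISRL with model $M$ and $\varphi$ a formula of the $A\bar BN$ fragment of EHS$^{+}$. If $I,I'$ are intervals of $M$ with $MCT_I^\varphi=MCT_{I'}^\varphi$, then $M,I\models\varphi$ if and only if $M,I'\models\varphi$.
   Context: **Regular expressions.** For a finite alphabet $X$, $RE_X$ is the set of regular expressions $e ::= \emptyset \mid \epsilon \mid s \mid e;e \mid e+e \mid e^*$ with $s\in X$. $L(e)$ denotes the standard language of $e$. **ISRL.** Fix agents $A=\{0,\dots,m\}$ and a finite set $\mathit{Var}$ of propositional variables. An ISRL is $IS=(\{L_i\},\{l_i^0\},\{ACT_i\},\{P_i\},\{t_i\},\lambda)$ where, for each $i\in A$: - $L_i$ is a finite set of local states and $l_i^0\in L_i$; - $ACT_i$ is a finite set of actions and $P_i:L_i\to 2^{ACT_i}$; - $t_i\subseteq L_i\times ACT\times L_i$, with $ACT=ACT_0\times\dots\times ACT_m$; - $\lambda:\mathit{Var}\to RE_G$, where $G=L_0\times\dots\times L_m$. $t^G((l_0,\dots,l_m),(l'_0,\dots,l'_m))$ holds iff some $(a_0,\dots,a_m)\in ACT$ has $a_i\in P_i(l_i)$ and $(l_i,(a_0,\dots,a_m),l'_i)\in t_i$ for all $i$. **Model of $IS$.** - States $S$ are the nonempty sequences $g_0\dots g_k$ with $g_0=(l_0^0,\dots,l_m^0)$ and $t^G(g_j,g_{j+1})$ for all $j<k$. - $t(g_0\dots g_k,g'_0\dots g'_l)$ iff $l=k+1$ and $g_j=g'_j$ for all $j\le k$. - $g_0\dots g_k\sim_i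 g'_0\dots g'_l$ iff $g_k,g'_l$ have the same $i$-th component. - $\mathrm{g}(g_0\dots g_k)=g_k$. **Intervals.** An interval is a nonempty sequence $I=s_1\dots s_n$ of states with $t(s_j,s_{j+1})$; $\mathit{first}(I)=s_1$, $\mathit{last}(I)=s_n$, $\mathrm{g}(I)=\mathrm{g}(s_1)\dots\mathrm{g}(s_n)$, and $\mathit{pi}(I)$ iff $n=1$. **Relations.** - $I\sim_i I'$ iff $|I|=|I'|$ and the states are pointwise $\sim_i$-related; $\sim_\Gamma$ is the transitive closure of $\bigcup_{i\in\Gamma}\sim_i$. - $I R_A I'$ iff $\mathit{first}(I')=\mathit{last}(I)$. - $I R_{\bar B} I'$ iff $I'=II_1$ for some interval $I_1$. - $I R_N I'$ iff $t(\mathit{last}(I),\mathit{first}(I'))$. - $R_{K_i}=\sim_i$, $R_{C_\Gamma}=\sim_\Gamma$, $R_{\langle A\rangle}=R_A$, $R_{\langle\bar B\rangle}=R_{\bar B}$, $R_{\langle N\rangle}=R_N$. **$A\bar BN$ fragment of EHS$^{+}$.** Syntax: $\varphi::=\mathit{pi}\mid p\mid\neg\varphi\mid\varphi\wedge\varphi\mid K_i\varphi\mid C_\Gamma\varphi\mid\langle A\rangle\varphi\mid\langle\bar B\rangle\varphi\mid\langle N\rangle\varphi$. Semantics: - $M,I\models\mathit{pi}$ iff $|I|=1$; - $M,I\models p$ iff $\mathrm{g}(I)\in L(\lambda(p))$; - Boolean connectives as usual; - for each modality $X$ above, the universal ones $K_i,C_\Gamma$ require the subformula on all $R_X$-related intervals,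 and the existential ones $\langle A\rangle,\langle\bar B\rangle,\langle N\rangle$ require it on some $R_X$-related interval. A top-level sub-formula of $\varphi$ is a sub-formula of the form $X\psi$ with $X$ a modality that is not in the scope of any modality. **Automata.** For $p\in\mathit{Var}$ let $\mathcal A^p$ be the minimal complete deterministic finite automaton for $L(\lambda(p))$ over alphabet $G$. $\mathcal A_I$ maps each $p$ to the state of $\mathcal A^p$ reached after reading $\mathrm{g}(I)$. **Modal context tree.** $MCT_I^\varphi$ is defined by recursion on $\varphi$ as the pair consisting of: - the root label $(\mathrm{g}(\mathit{first}(I)),\mathrm{g}(\mathit{last}(I)),\mathit{pi}(I),\mathcal A_I)$; - for each top-level sub-formula $X\psi$ of $\varphi$, the set $\{MCT_{I'}^\psi : I R_X I'\}$. *)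

theory Defs
  imports Main
begin

datatype 'a rexp = Zero | One | Atom 'a | Times "'a rexp" "'a rexp"
  | Plus "'a rexp" "'a rexp" | Star "'a rexp"

definition conc_lang :: "'a list set \<Rightarrow> 'a list set \<Rightarrow> 'a list set" where
  "conc_lang A B = {u @ v | u v. u \<in> A \<and> v \<in> B}"

definition star_lang :: "'a list set \<Rightarrow> 'a list set" where
  "star_lang A = {concat ws | ws. set ws \<subseteq> A}"

primrec lang :: "'a rexp \<Rightarrow> 'a list set" where
  "lang Zero = {}"
| "lang One = {[]}"
| "lang (Atom a) = {[a]}"
| "lang (Times e f) = conc_lang (lang e) (lang f)"
| "lang (Plus e f) = lang e \<union> lang f"
| "lang (Star e) = star_lang (lang e)"

primrec atoms :: "'a rexp \<Rightarrow> 'a set" where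
  "atoms Zero = {}"
| "atoms One = {}"
| "atoms (Atom a) = {a}"
| "atoms (Times e f) = atoms e \<union> atoms f"
| "atoms (Plus e f) = atoms e \<union> atoms f"
| "atoms (Star e) = atoms e"

text \<open>Agents are 0..nag; a global state (resp. joint action) is a list of
  length nag+1 of local states (resp. local actions).\<close>

record ('l, 'act, 'v) isrl =
  nag  :: nat
  Loc  :: "nat \<Rightarrow> 'l set"
  init :: "nat \<Rightarrow> 'l"
  Act  :: "nat \<Rightarrow> 'act set"
  Prot :: "nat \<Rightarrow> 'l \<Rightarrow> 'act set"
  Trans :: "nat \<Rightarrow> ('l \<times> 'act list \<times> 'l) set"
  lab  :: "'v \<Rightarrow> 'l list rexp"

definition globals :: "('l,'act,'v) isrl \<Rightarrow> 'l list set" where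
  "globals IS = {g. length g = Suc (nag IS) \<and> (\<forall>i\<le>nag IS. g ! i \<in> Loc IS i)}"

definition jact :: "('l,'act,'v) isrl \<Rightarrow> 'act list set" where
  "jact IS = {a. length a = Suc (nag IS) \<and> (\<forall>i\<le>nag IS. a ! i \<in> Act IS i)}"

definition is_isrl :: "('l,'act,'v) isrl \<Rightarrow> bool" where
  "is_isrl IS \<longleftrightarrow>
     (\<forall>i\<le>nag IS. finite (Loc IS i) \<and> init IS i \<in> Loc IS i \<and> finite (Act IS i)
        \<and> (\<forall>l\<in>Loc IS i. Prot IS i l \<subseteq> Act IS i)
        \<and> Trans IS i \<subseteq> Loc IS i \<times> jact IS \<times> Loc IS i)
     \<and> (\<forall>p. atoms (lab IS p) \<subseteq> globals IS)"

definition ginit :: "('l,'act,'v) isrl \<Rightarrow> 'l list" where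
  "ginit IS = map (init IS) [0..<Suc (nag IS)]"

definition tG :: "('l,'act,'v) isrl \<Rightarrow> 'l list \<Rightarrow> 'l list \<Rightarrow> bool" where
  "tG IS g g' \<longleftrightarrow> g \<in> globals IS \<and> g' \<in> globals IS \<and>
     (\<exists>a\<in>jact IS. \<forall>i\<le>nag IS. a ! i \<in> Prot IS i (g ! i) \<and> (g ! i, a, g' ! i) \<in> Trans IS i)"

text \<open>States are nonempty sequences of global states (lists); the current
  global state g(s) is the last element.\<close>

definition mstate :: "('l,'act,'v) isrl \<Rightarrow> 'l list list \<Rightarrow> bool" where
  "mstate IS s \<longleftrightarrow> s \<noteq> [] \<and> hd s = ginit IS \<and>
     (\<forall>j. Suc j < length s \<longrightarrow> tG IS (s ! j) (s ! Suc j))"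

definition mtrans :: "('l,'act,'v) isrl \<Rightarrow> 'l list list \<Rightarrow> 'l list list \<Rightarrow> bool" where
  "mtrans IS s s' \<longleftrightarrow> mstate IS s \<and> mstate IS s' \<and>
     length s' = Suc (length s) \<and> (\<forall>j<length s. s ! j = s' ! j)"

definition msim :: "('l,'act,'v) isrl \<Rightarrow> nat \<Rightarrow> 'l list list \<Rightarrow> 'l list list \<Rightarrow> bool" where
  "msim IS i s s' \<longleftrightarrow> mstate IS s \<and> mstate IS s' \<and> last s ! i = last s' ! i"

definition gs :: "'l list list \<Rightarrow> 'l list" where
  "gs s = last s"

definition interval :: "('l,'act,'v) isrl \<Rightarrow> 'l list list list \<Rightarrow> bool" where
  "interval IS I \<longleftrightarrow> I \<noteq> [] \<and> (\<forall>s\<in>set I. mstate IS s) \<and>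
     (\<forall>j. Suc j < length I \<longrightarrow> mtrans IS (I ! j) (I ! Suc j))"

definition gI :: "'l list list list \<Rightarrow> 'l list list" where
  "gI I = map gs I"

definition RK :: "('l,'act,'v) isrl \<Rightarrow> nat \<Rightarrow> 'l list list list \<Rightarrow> 'l list list list \<Rightarrow> bool" where
  "RK IS i I I' \<longleftrightarrow> interval IS I \<and> interval IS I' \<and> length I = length I' \<and>
     list_all2 (msim IS i) I I'"

definition RC :: "('l,'act,'v) isrl \<Rightarrow> nat set \<Rightarrow> 'l list list list \<Rightarrow> 'l list list list \<Rightarrow> bool" where
  "RC IS \<Gamma> = tranclp (\<lambda>I I'. \<exists>i\<in>\<Gamma>. RK IS i I I')"

definition RA :: "('l,'act,'v) isrl \<Rightarrow> 'l list list list \<Rightarrow> 'l list list list \<Rightarrow> bool" where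
  "RA IS I I' \<longleftrightarrow> interval IS I \<and> interval IS I' \<and> hd I' = last I"

definition RB :: "('l,'act,'v) isrl \<Rightarrow> 'l list list list \<Rightarrow> 'l list list list \<Rightarrow> bool" where
  "RB IS I I' \<longleftrightarrow> interval IS I \<and> interval IS I' \<and> (\<exists>I1. interval IS I1 \<and> I' = I @ I1)"

definition RN :: "('l,'act,'v) isrl \<Rightarrow> 'l list list list \<Rightarrow> 'l list list list \<Rightarrow> bool" where
  "RN IS I I' \<longleftrightarrow> interval IS I \<and> interval IS I' \<and> mtrans IS (last I) (hd I')"

datatype 'v fm = FPi | FProp 'v | FNeg "'v fm" | FAnd "'v fm" "'v fm"
  | FK nat "'v fm" | FC "nat set" "'v fm"
  | FA "'v fm" | FB "'v fm" | FN "'v fm"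

primrec wf_fm :: "('l,'act,'v) isrl \<Rightarrow> 'v fm \<Rightarrow> bool" where
  "wf_fm IS FPi = True"
| "wf_fm IS (FProp p) = True"
| "wf_fm IS (FNeg f) = wf_fm IS f"
| "wf_fm IS (FAnd f g) = (wf_fm IS f \<and> wf_fm IS g)"
| "wf_fm IS (FK i f) = (i \<le> nag IS \<and> wf_fm IS f)"
| "wf_fm IS (FC G f) = (G \<noteq> {} \<and> G \<subseteq> {0..nag IS} \<and> wf_fm IS f)"
| "wf_fm IS (FA f) = wf_fm IS f"
| "wf_fm IS (FB f) = wf_fm IS f"
| "wf_fm IS (FN f) = wf_fm IS f"

primrec sat :: "('l,'act,'v) isrl \<Rightarrow> 'l list list list \<Rightarrow> 'v fm \<Rightarrow> bool" where
  "sat IS I FPi = (length I = 1)"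
| "sat IS I (FProp p) = (gI I \<in> lang (lab IS p))"
| "sat IS I (FNeg f) = (\<not> sat IS I f)"
| "sat IS I (FAnd f g) = (sat IS I f \<and> sat IS I g)"
| "sat IS I (FK i f) = (\<forall>J. interval IS J \<and> RK IS i I J \<longrightarrow> sat IS J f)"
| "sat IS I (FC G f) = (\<forall>J. interval IS J \<and> RC IS G I J \<longrightarrow> sat IS J f)"
| "sat IS I (FA f) = (\<exists>J. interval IS J \<and> RA IS I J \<and> sat IS J f)"
| "sat IS I (FB f) = (\<exists>J. interval IS J \<and> RB IS I J \<and> sat IS J f)"
| "sat IS I (FN f) = (\<exists>J. interval IS J \<and> RN IS I J \<and> sat IS J f)"

text \<open>The states of the minimal complete DFA for a language L are (canonically,
  by Myhill--Nerode) the residuals w^{-1}L; the state reached after reading w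
  is w^{-1}L.\<close>

definition residual :: "'a list set \<Rightarrow> 'a list \<Rightarrow> 'a list set" where
  "residual L w = {v. w @ v \<in> L}"

definition autI :: "('l,'act,'v) isrl \<Rightarrow> 'l list list list \<Rightarrow> 'v \<Rightarrow> 'l list list set" where
  "autI IS I = (\<lambda>p. residual (lang (lab IS p)) (gI I))"

definition root_label :: "('l,'act,'v) isrl \<Rightarrow> 'l list list list
    \<Rightarrow> 'l list \<times> 'l list \<times> bool \<times> ('v \<Rightarrow> 'l list list set)" where
  "root_label IS I = (gs (hd I), gs (last I), length I = 1, autI IS I)"

text \<open>Equality of modal context trees, unfolded: equal root labels and, for
  every top-level sub-formula X psi, equal sets of subtrees
  {MCT_J^psi : I R_X J} = {MCT_J'^psi : I' R_X J'}.  subtrees_eq f I I'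
  expresses the second part by recursion on f.\<close>

definition sets_eq :: "('l,'act,'v) isrl \<Rightarrow> ('l list list list \<Rightarrow> 'l list list list \<Rightarrow> bool)
   \<Rightarrow> ('l list list list \<Rightarrow> 'l list list list \<Rightarrow> bool)
   \<Rightarrow> 'l list list list \<Rightarrow> 'l list list list \<Rightarrow> bool" where
  "sets_eq IS R E I I' \<longleftrightarrow>
     (\<forall>J. interval IS J \<and> R I J \<longrightarrow> (\<exists>J'. interval IS J' \<and> R I' J' \<and> E J J')) \<and>
     (\<forall>J'. interval IS J' \<and> R I' J' \<longrightarrow> (\<exists>J. interval IS J \<and> R I J \<and> E J J'))"

primrec subtrees_eq :: "('l,'act,'v) isrl \<Rightarrow> 'v fm \<Rightarrow> 'l list list list \<Rightarrow> 'l list list list \<Rightarrow> bool" where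
  "subtrees_eq IS FPi I I' = True"
| "subtrees_eq IS (FProp p) I I' = True"
| "subtrees_eq IS (FNeg f) I I' = subtrees_eq IS f I I'"
| "subtrees_eq IS (FAnd f g) I I' = (subtrees_eq IS f I I' \<and> subtrees_eq IS g I I')"
| "subtrees_eq IS (FK i f) I I' = sets_eq IS (RK IS i)
     (\<lambda>J J'. root_label IS J = root_label IS J' \<and> subtrees_eq IS f J J') I I'"
| "subtrees_eq IS (FC G f) I I' = sets_eq IS (RC IS G)
     (\<lambda>J J'. root_label IS J = root_label IS J' \<and> subtrees_eq IS f J J') I I'"
| "subtrees_eq IS (FA f) I I' = sets_eq IS (RA IS)
     (\<lambda>J J'. root_label IS J = root_label IS J' \<and> subtrees_eq IS f J J') I I'"
| "subtrees_eq IS (FB f) I I' = sets_eq IS (RB IS)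
     (\<lambda>J J'. root_label IS J = root_label IS J' \<and> subtrees_eq IS f J J') I I'"
| "subtrees_eq IS (FN f) I I' = sets_eq IS (RN IS)
     (\<lambda>J J'. root_label IS J = root_label IS J' \<and> subtrees_eq IS f J J') I I'"

definition mct_eq :: "('l,'act,'v) isrl \<Rightarrow> 'v fm \<Rightarrow> 'l list list list \<Rightarrow> 'l list list list \<Rightarrow> bool" where
  "mct_eq IS f I I' \<longleftrightarrow> root_label IS I = root_label IS I' \<and> subtrees_eq IS f I I'"

end

theory Submission
  imports Defs
begin

text \<open>A propositional letter p holds on I iff the
  empty word is accepted from the automaton state of p reached after g(I), which
  the root label records; pi and the Boolean cases are immediate. For a modality
  X psi, equality of the subtree sets pairs each R_X-successor of I with an
  R_X-successor of I' carrying the same tree for psi, on which psi agrees by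
  induction.\<close>

lemma Nil_in_residual_iff: "[] \<in> residual L w \<longleftrightarrow> w \<in> L"
  by (simp add: residual_def)

lemma sets_eq_ex_iff:
  assumes "sets_eq IS R E I I'"
    and "\<And>J J'. interval IS J \<Longrightarrow> interval IS J' \<Longrightarrow> E J J' \<Longrightarrow> P J \<longleftrightarrow> P J'"
  shows "(\<exists>J. interval IS J \<and> R I J \<and> P J) \<longleftrightarrow> (\<exists>J'. interval IS J' \<and> R I' J' \<and> P J')"
  using assms unfolding sets_eq_def by metis

lemma sets_eq_all_iff:
  assumes "sets_eq IS R E I I'"
    and "\<And>J J'. interval IS J \<Longrightarrow> interval IS J' \<Longrightarrow> E J J' \<Longrightarrow> P J \<longleftrightarrow> P J'"
  shows "(\<forall>J. interval IS J \<and> R I J \<longrightarrow> P J) \<longleftrightarrow> (\<forall>J'. interval IS J' \<and> R I' J' \<longrightarrow> P J')"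
  using assms unfolding sets_eq_def by metis

lemma sat_eq_if_mct_eq:
  assumes "interval IS I" and "interval IS I'" and "mct_eq IS \<phi> I I'"
  shows "sat IS I \<phi> \<longleftrightarrow> sat IS I' \<phi>"
  using assms
proof (induction \<phi> arbitrary: I I')
  case FPi
  then show ?case by (simp add: mct_eq_def root_label_def)
next
  case (FProp p)
  then have "autI IS I p = autI IS I' p" by (simp add: mct_eq_def root_label_def)
  then show ?case by (metis Nil_in_residual_iff autI_def sat.simps(2))
next
  case (FNeg f)
  then show ?case by (simp add: mct_eq_def)
next
  case (FAnd f g)
  then show ?case by (simp add: mct_eq_def)
next
  case (FK i f)
  then have "sets_eq IS (RK IS i) (mct_eq IS f) I I'" by (simp add: mct_eq_def[abs_def])
  then show ?case unfolding sat.simps by (rule sets_eq_all_iff) (rule FK.IH)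
next
  case (FC G f)
  then have "sets_eq IS (RC IS G) (mct_eq IS f) I I'" by (simp add: mct_eq_def[abs_def])
  then show ?case unfolding sat.simps by (rule sets_eq_all_iff) (rule FC.IH)
next
  case (FA f)
  then have "sets_eq IS (RA IS) (mct_eq IS f) I I'" by (simp add: mct_eq_def[abs_def])
  then show ?case unfolding sat.simps by (rule sets_eq_ex_iff) (rule FA.IH)
next
  case (FB f)
  then have "sets_eq IS (RB IS) (mct_eq IS f) I I'" by (simp add: mct_eq_def[abs_def])
  then show ?case unfolding sat.simps by (rule sets_eq_ex_iff) (rule FB.IH)
next
  case (FN f)
  then have "sets_eq IS (RN IS) (mct_eq IS f) I I'" by (simp add: mct_eq_def[abs_def])
  then show ?case unfolding sat.simps by (rule sets_eq_ex_iff) (rule FN.IH)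
qed

theorem mainTheorem10:
  fixes IS :: "('l, 'act, 'v::finite) isrl" and \<phi> :: "'v fm"
    and I I' :: "'l list list list"
  assumes "is_isrl IS"
    and "wf_fm IS \<phi>"
    and "interval IS I" and "interval IS I'"
    and "mct_eq IS \<phi> I I'"
  shows "sat IS I \<phi> \<longleftrightarrow> sat IS I' \<phi>"
  using assms(3-5) by (rule sat_eq_if_mct_eq)

end
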